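(* For any ultradiscrete ballean $(X,\mathcal E_X)$, the coarse structure ${\downarrow}\mathcal E_X$ coincides with the universal coarse structure ${\Uparrow}\mathcal B_X$ of its bornology.
   Context: A ballean is a pair $(X,\mathcal E_X)$ where $X$ is a set and $\mathcal E_X$ is a family of subsets of $X\times X$ (entourages) such that: each $E\in\mathcal E_X$ contains the diagonal $\Delta_X$; for any $E,F\in\mathcal E_X$ there is $D\in\mathcal E_X$ with $E\circ F^{-1}\subset D$; and $\bigcup\mathcal E_X=X\times X$. For $E\subset X\times X$, $x\in X$, $A\subset X$: $E[x]=\{y:(x,y)\in E\}$, $E[A]=\bigcup_{a\in A}E[a]$, $E^{-1}=\{(y,x):(x,y)\in E\}$. $B\subset X$ is bounded if $B\subset E[x]$ for some $E\in\mathcal E_X$, $x\in X$; $\mathcal B_X$ is the family of bounded sets. Sets $A,B$ are asymptotically disjoint if $E[A]\cap E[B]\in\mathcal B_X$ for all $E\in\mathcal E_X$; $X$ is ultranormal if it contains no two unbounded asymptotically disjoint sets. $X$ is discrete if $X$ is unbounded and for every $E\in\mathcal E_X$ there is a bounded $B_E$ with $E[x]=\{x\}$ for $x\in X\setminus B_E$; ultradiscrete = discrete and ultranormal. ${\downarrow}\mathcal E_X=\{E\subset X\times X:\Delta_X\subset E\subset F\text{ for some }F\in\mathcal E_X\}$. ${\Uparrow}\mathcal B_X$ is the family of all $G\subset X\times X$ with $\Delta_X\subset G$ such that $G[B]$ and $G^{-1}[B]$ are bounded for every bounded $B\subset X$. *)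

theory Defs
  imports Main
begin

text \<open>Balls: E[x] = {y. (x,y) \<in> E} is written  E `` {x},  and E[A] is  E `` A.\<close>

definition ballean :: "'a set \<Rightarrow> ('a \<times> 'a) set set \<Rightarrow> bool" where
  "ballean X \<E> \<longleftrightarrow>
     (\<forall>E\<in>\<E>. Id_on X \<subseteq> E \<and> E \<subseteq> X \<times> X) \<and>
     (\<forall>E\<in>\<E>. \<forall>F\<in>\<E>. \<exists>D\<in>\<E>. E O F\<inverse> \<subseteq> D) \<and>
     \<Union>\<E> = X \<times> X"

definition bounded_in :: "'a set \<Rightarrow> ('a \<times> 'a) set set \<Rightarrow> 'a set \<Rightarrow> bool" where
  "bounded_in X \<E> B \<longleftrightarrow> (\<exists>E\<in>\<E>. \<exists>x\<in>X. B \<subseteq> E `` {x})"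

definition asymp_disjoint :: "'a set \<Rightarrow> ('a \<times> 'a) set set \<Rightarrow> 'a set \<Rightarrow> 'a set \<Rightarrow> bool" where
  "asymp_disjoint X \<E> A B \<longleftrightarrow> (\<forall>E\<in>\<E>. bounded_in X \<E> (E `` A \<inter> E `` B))"

definition ultranormal :: "'a set \<Rightarrow> ('a \<times> 'a) set set \<Rightarrow> bool" where
  "ultranormal X \<E> \<longleftrightarrow>
     \<not> (\<exists>A B. A \<subseteq> X \<and> B \<subseteq> X \<and> \<not> bounded_in X \<E> A \<and> \<not> bounded_in X \<E> B
              \<and> asymp_disjoint X \<E> A B)"

definition discrete_ballean :: "'a set \<Rightarrow> ('a \<times> 'a) set set \<Rightarrow> bool" where
  "discrete_ballean X \<E> \<longleftrightarrow> \<not> bounded_in X \<E> X \<and>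
     (\<forall>E\<in>\<E>. \<exists>B. B \<subseteq> X \<and> bounded_in X \<E> B \<and> (\<forall>x\<in>X - B. E `` {x} = {x}))"

definition ultradiscrete :: "'a set \<Rightarrow> ('a \<times> 'a) set set \<Rightarrow> bool" where
  "ultradiscrete X \<E> \<longleftrightarrow> discrete_ballean X \<E> \<and> ultranormal X \<E>"

definition down_closure :: "'a set \<Rightarrow> ('a \<times> 'a) set set \<Rightarrow> ('a \<times> 'a) set set" where
  "down_closure X \<E> = {E. Id_on X \<subseteq> E \<and> (\<exists>F\<in>\<E>. E \<subseteq> F)}"

definition universal_coarse :: "'a set \<Rightarrow> ('a \<times> 'a) set set \<Rightarrow> ('a \<times> 'a) set set" where
  "universal_coarse X \<E> = {G. Id_on X \<subseteq> G \<and> G \<subseteq> X \<times> X \<and>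
     (\<forall>B. B \<subseteq> X \<longrightarrow> bounded_in X \<E> B \<longrightarrow>
        bounded_in X \<E> (G `` B) \<and> bounded_in X \<E> (G\<inverse> `` B))}"

end

theory Submission
  imports Defs
begin

text \<open>
  One inclusion holds in every ballean. For the other, let G be an entourage of the universal
  coarse structure and take, by Zorn, a maximal set M \<subseteq> X containing no two distinct
  G-related points. Maximality gives X \<subseteq> G[M] \<union> G\<inverse>[M], so M is unbounded because X is.
  In a discrete ballean M and X - M are asymptotically disjoint, hence ultranormality makes
  X - M bounded. Every pair of distinct G-related points has an endpoint outside M, so both
  endpoints lie in the bounded set C = G[X - M] \<union> G\<inverse>[X - M]; thus G \<subseteq> Id_on X \<union> C \<times> C,
  which lies in a single entourage.
\<close>

lemma ballean_subset: "ballean X \<E> \<Longrightarrow> E \<in> \<E> \<Longrightarrow> E \<subseteq> X \<times> X"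
  unfolding ballean_def by blast

lemma ballean_diag: "ballean X \<E> \<Longrightarrow> E \<in> \<E> \<Longrightarrow> x \<in> X \<Longrightarrow> (x, x) \<in> E"
  unfolding ballean_def Id_on_def by blast

lemma ballean_relcomp_converse:
  "ballean X \<E> \<Longrightarrow> E \<in> \<E> \<Longrightarrow> F \<in> \<E> \<Longrightarrow> \<exists>D\<in>\<E>. E O F\<inverse> \<subseteq> D"
  unfolding ballean_def by blast

lemma ballean_covers: "ballean X \<E> \<Longrightarrow> x \<in> X \<Longrightarrow> y \<in> X \<Longrightarrow> \<exists>E\<in>\<E>. (x, y) \<in> E"
  unfolding ballean_def by blast

lemma ballean_converse:
  assumes b: "ballean X \<E>" and E: "E \<in> \<E>"
  shows "\<exists>D\<in>\<E>. E\<inverse> \<subseteq> D"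
proof -
  obtain D where D: "D \<in> \<E>" "E O E\<inverse> \<subseteq> D"
    using ballean_relcomp_converse[OF b E E] by blast
  have "E\<inverse> \<subseteq> E O E\<inverse>"
  proof
    fix p assume "p \<in> E\<inverse>"
    then obtain x y where p: "p = (x, y)" "(y, x) \<in> E" by blast
    then have "(x, x) \<in> E" using ballean_diag[OF b E] ballean_subset[OF b E] by blast
    with p show "p \<in> E O E\<inverse>" by blast
  qed
  with D show ?thesis by blast
qed

lemma ballean_relcomp:
  assumes b: "ballean X \<E>" and E: "E \<in> \<E>" and F: "F \<in> \<E>"
  shows "\<exists>D\<in>\<E>. E O F \<subseteq> D"
proof -
  obtain F' where F': "F' \<in> \<E>" "F\<inverse> \<subseteq> F'" using ballean_converse[OF b F] by blast
  obtain D where D: "D \<in> \<E>" "E O F'\<inverse> \<subseteq> D"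
    using ballean_relcomp_converse[OF b E F'(1)] by blast
  have "E O F \<subseteq> E O F'\<inverse>" using F'(2) by blast
  with D show ?thesis by blast
qed

lemma ballean_Un:
  assumes b: "ballean X \<E>" and E: "E \<in> \<E>" and F: "F \<in> \<E>"
  shows "\<exists>D\<in>\<E>. E \<union> F \<subseteq> D"
proof -
  obtain D where D: "D \<in> \<E>" "E O F \<subseteq> D" using ballean_relcomp[OF b E F] by blast
  have "E \<union> F \<subseteq> E O F"
  proof
    fix p assume "p \<in> E \<union> F"
    then obtain x y where p: "p = (x, y)" "(x, y) \<in> E \<union> F" by (cases p) blast
    then have "x \<in> X" "y \<in> X" using ballean_subset[OF b E] ballean_subset[OF b F] by blast+
    then have "(x, x) \<in> E" "(y, y) \<in> F" using ballean_diag[OF b E] ballean_diag[OF b F] by blast+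
    with p show "p \<in> E O F" by blast
  qed
  with D show ?thesis by blast
qed

lemma bounded_in_subset: "bounded_in X \<E> B \<Longrightarrow> A \<subseteq> B \<Longrightarrow> bounded_in X \<E> A"
  unfolding bounded_in_def by blast

lemma bounded_in_imp_subset: "ballean X \<E> \<Longrightarrow> bounded_in X \<E> B \<Longrightarrow> B \<subseteq> X"
  unfolding bounded_in_def using ballean_subset by blast

lemma bounded_in_Image:
  assumes b: "ballean X \<E>" and B: "bounded_in X \<E> B" and F: "F \<in> \<E>"
  shows "bounded_in X \<E> (F `` B)"
proof -
  obtain H x where H: "H \<in> \<E>" "x \<in> X" "B \<subseteq> H `` {x}"
    using B unfolding bounded_in_def by blast
  obtain D where D: "D \<in> \<E>" "H O F \<subseteq> D" using ballean_relcomp[OF b H(1) F] by blast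
  have "F `` B \<subseteq> D `` {x}" using H(3) D(2) by blast
  with D(1) H(2) show ?thesis unfolding bounded_in_def by blast
qed

lemma bounded_in_square:
  assumes b: "ballean X \<E>" and C: "bounded_in X \<E> C"
  shows "\<exists>D\<in>\<E>. C \<times> C \<subseteq> D"
proof -
  obtain H x where H: "H \<in> \<E>" "x \<in> X" "C \<subseteq> H `` {x}"
    using C unfolding bounded_in_def by blast
  obtain H' where H': "H' \<in> \<E>" "H\<inverse> \<subseteq> H'" using ballean_converse[OF b H(1)] by blast
  obtain D where D: "D \<in> \<E>" "H' O H \<subseteq> D" using ballean_relcomp[OF b H'(1) H(1)] by blast
  have "C \<times> C \<subseteq> H' O H" using H(3) H'(2) by blast
  with D show ?thesis by blast
qed

lemma bounded_in_Un:
  assumes b: "ballean X \<E>" and B1: "bounded_in X \<E> B1" and B2: "bounded_in X \<E> B2"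
  shows "bounded_in X \<E> (B1 \<union> B2)"
proof -
  obtain H1 x1 where H1: "H1 \<in> \<E>" "x1 \<in> X" "B1 \<subseteq> H1 `` {x1}"
    using B1 unfolding bounded_in_def by blast
  obtain H2 x2 where H2: "H2 \<in> \<E>" "x2 \<in> X" "B2 \<subseteq> H2 `` {x2}"
    using B2 unfolding bounded_in_def by blast
  obtain K where K: "K \<in> \<E>" "(x1, x2) \<in> K" using ballean_covers[OF b H1(2) H2(2)] by blast
  obtain D1 where D1: "D1 \<in> \<E>" "K O H2 \<subseteq> D1" using ballean_relcomp[OF b K(1) H2(1)] by blast
  obtain D where D: "D \<in> \<E>" "H1 \<union> D1 \<subseteq> D" using ballean_Un[OF b H1(1) D1(1)] by blast
  have "B1 \<union> B2 \<subseteq> D `` {x1}" using H1(3) H2(3) K(2) D1(2) D(2) by blast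
  with D(1) H1(2) show ?thesis unfolding bounded_in_def by blast
qed

lemma down_closure_subset_universal_coarse:
  assumes b: "ballean X \<E>"
  shows "down_closure X \<E> \<subseteq> universal_coarse X \<E>"
proof
  fix E assume "E \<in> down_closure X \<E>"
  then obtain F where F: "Id_on X \<subseteq> E" "F \<in> \<E>" "E \<subseteq> F"
    unfolding down_closure_def by blast
  obtain F' where F': "F' \<in> \<E>" "F\<inverse> \<subseteq> F'" using ballean_converse[OF b F(2)] by blast
  have "E `` B \<subseteq> F `` B" "E\<inverse> `` B \<subseteq> F' `` B" for B using F(3) F'(2) by blast+
  then have "bounded_in X \<E> (E `` B) \<and> bounded_in X \<E> (E\<inverse> `` B)" if "bounded_in X \<E> B" for B
    using bounded_in_Image[OF b that F(2)] bounded_in_Image[OF b that F'(1)]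
    by (blast intro: bounded_in_subset)
  with F ballean_subset[OF b F(2)] show "E \<in> universal_coarse X \<E>"
    unfolding universal_coarse_def by blast
qed

lemma discrete_asymp_disjoint_complement:
  assumes b: "ballean X \<E>" and d: "discrete_ballean X \<E>" and M: "M \<subseteq> X"
  shows "asymp_disjoint X \<E> M (X - M)"
  unfolding asymp_disjoint_def
proof
  fix E assume E: "E \<in> \<E>"
  obtain B where B: "bounded_in X \<E> B" "\<forall>x\<in>X - B. E `` {x} = {x}"
    using d E unfolding discrete_ballean_def by blast
  have "E `` M \<inter> E `` (X - M) \<subseteq> E `` B"
  proof
    fix z assume "z \<in> E `` M \<inter> E `` (X - M)"
    then obtain a c where ac: "a \<in> M" "(a, z) \<in> E" "c \<in> X - M" "(c, z) \<in> E" by blast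
    have "a \<in> B \<or> c \<in> B"
    proof (rule ccontr)
      assume "\<not> (a \<in> B \<or> c \<in> B)"
      then have "z = a" "z = c" using B(2) ac M by blast+
      with ac show False by blast
    qed
    with ac show "z \<in> E `` B" by blast
  qed
  then show "bounded_in X \<E> (E `` M \<inter> E `` (X - M))"
    using bounded_in_subset bounded_in_Image[OF b B(1) E] by blast
qed

lemma ultradiscrete_bounded_or_complement_bounded:
  assumes "ballean X \<E>" and "ultradiscrete X \<E>" and "M \<subseteq> X"
  shows "bounded_in X \<E> M \<or> bounded_in X \<E> (X - M)"
  using assms discrete_asymp_disjoint_complement[OF assms(1) _ assms(3)]
  unfolding ultradiscrete_def ultranormal_def by blast

definition independent :: "('a \<times> 'a) set \<Rightarrow> 'a set \<Rightarrow> bool" where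
  "independent G M \<longleftrightarrow> G \<inter> M \<times> M \<subseteq> Id"

lemma independent_dominating_set_exists:
  "\<exists>M. M \<subseteq> X \<and> independent G M \<and> X \<subseteq> M \<union> G `` M \<union> G\<inverse> `` M"
proof -
  let ?I = "{M. M \<subseteq> X \<and> independent G M}"
  have "\<forall>C\<in>chains ?I. \<Union>C \<in> ?I"
  proof
    fix C assume C: "C \<in> chains ?I"
    have "x = y" if "x \<in> S1" "y \<in> S2" "S1 \<in> C" "S2 \<in> C" "(x, y) \<in> G" for x y S1 S2
    proof -
      have "S1 \<subseteq> S2 \<or> S2 \<subseteq> S1" using C that unfolding chains_def chain_subset_def by blast
      with C that show ?thesis unfolding chains_def independent_def by blast
    qed
    with C show "\<Union>C \<in> ?I" unfolding chains_def independent_def by blast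
  qed
  from Zorn_Lemma[OF this] obtain M where M: "M \<in> ?I" and max: "\<forall>Z\<in>?I. M \<subseteq> Z \<longrightarrow> Z = M" ..
  have "x \<in> M \<union> G `` M \<union> G\<inverse> `` M" if x: "x \<in> X" "x \<notin> M" for x
  proof -
    have "\<not> independent G (insert x M)" using max M x by blast
    with M show ?thesis unfolding independent_def by blast
  qed
  with M show ?thesis by blast
qed

lemma universal_coarse_subset_down_closure:
  assumes b: "ballean X \<E>" and ud: "ultradiscrete X \<E>"
  shows "universal_coarse X \<E> \<subseteq> down_closure X \<E>"
proof
  fix G assume G: "G \<in> universal_coarse X \<E>"
  then have G_diag: "Id_on X \<subseteq> G" and G_sub: "G \<subseteq> X \<times> X"
    unfolding universal_coarse_def by blast+
  have G_bounded: "bounded_in X \<E> (B \<union> G `` B \<union> G\<inverse> `` B)" if B: "bounded_in X \<E> B" for B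
  proof -
    have "bounded_in X \<E> (G `` B)" "bounded_in X \<E> (G\<inverse> `` B)"
      using G B bounded_in_imp_subset[OF b B] unfolding universal_coarse_def by blast+
    with B show ?thesis by (intro bounded_in_Un[OF b])
  qed
  obtain M where M: "M \<subseteq> X" "independent G M" and cover: "X \<subseteq> M \<union> G `` M \<union> G\<inverse> `` M"
    using independent_dominating_set_exists[of X G] by blast
  have "\<not> bounded_in X \<E> M"
  proof
    assume "bounded_in X \<E> M"
    then have "bounded_in X \<E> X" using bounded_in_subset[OF G_bounded cover] by blast
    with ud show False unfolding ultradiscrete_def discrete_ballean_def by blast
  qed
  then have "bounded_in X \<E> (X - M)"
    using ultradiscrete_bounded_or_complement_bounded[OF b ud M(1)] by blast
  define C where "C = (X - M) \<union> G `` (X - M) \<union> G\<inverse> `` (X - M)"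
  have "bounded_in X \<E> C" unfolding C_def by (rule G_bounded) fact
  then obtain D where D: "D \<in> \<E>" "C \<times> C \<subseteq> D" using bounded_in_square[OF b] by blast
  have "G \<subseteq> Id_on X \<union> C \<times> C"
  proof
    fix p assume "p \<in> G"
    then obtain x y where p: "p = (x, y)" "(x, y) \<in> G" by (cases p) blast
    then have "x \<in> X" "y \<in> X" using G_sub by blast+
    moreover have "x = y \<or> x \<notin> M \<or> y \<notin> M"
      using p(2) M(2) unfolding independent_def by blast
    ultimately show "p \<in> Id_on X \<union> C \<times> C"
      using p unfolding C_def by blast
  qed
  moreover have "Id_on X \<subseteq> D" using ballean_diag[OF b D(1)] by auto
  ultimately have "G \<subseteq> D" using D(2) by blast
  with G_diag D(1) show "G \<in> down_closure X \<E>" unfolding down_closure_def by blast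
qed

theorem proposition6p3:
  fixes X :: "'a set" and \<E> :: "('a \<times> 'a) set set"
  assumes "ballean X \<E>" and "ultradiscrete X \<E>"
  shows "down_closure X \<E> = universal_coarse X \<E>"
  using down_closure_subset_universal_coarse[OF assms(1)]
    universal_coarse_subset_down_closure[OF assms] by (rule subset_antisym)

end
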